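(* Let $G$ be a simple undirected graph on $\{1,\dots,n\}$ ($n\ge2$) with adjacency $g_{ij}$ ($g_{ii}=0$) and $m$ edges. Suppose the potential outcomes are $Y_i(\mathbf z)=\alpha_i+\beta_iz_i+\gamma\sum_jg_{ij}z_j$ for constants $\alpha_i,\beta_i,\gamma$. Under a completely randomized design with $n_t$ treated units, $1\le n_t\le n-1$, the estimator $$\hat\beta_{naive}=\frac{\sum_i Y_i^{obs}Z_i}{\sum_i Z_i}-\frac{\sum_i Y_i^{obs}(1-Z_i)}{\sum_i(1-Z_i)}$$ satisfies $\mathbb E[\hat\beta_{naive}]-\mathrm{DTE}=-\gamma\frac{2m}{n(n-1)}$, where $\mathrm{DTE}=\frac1n\sum_i\beta_i$ is the direct treatment effect (the average of $Y_i$ with unit $i$ treated and no neighbor treated minus $Y_i$ with no unit treated).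
   Context: Completely randomized design: $\mathbf Z$ is uniform over vectors in $\{0,1\}^n$ with exactly $n_t$ ones. $Y_i^{obs}=Y_i(\mathbf Z)$. *)

theory Defs
  imports "HOL-Probability.Probability"
begin

definition assignments :: "nat \<Rightarrow> nat \<Rightarrow> (nat \<Rightarrow> real) set" where
  "assignments n nt = {z. (\<forall>i\<in>{1..n}. z i \<in> {0,1}) \<and> (\<forall>i. i \<notin> {1..n} \<longrightarrow> z i = 0)
       \<and> card {i\<in>{1..n}. z i = 1} = nt}"

definition crd :: "nat \<Rightarrow> nat \<Rightarrow> (nat \<Rightarrow> real) pmf" where
  "crd n nt = pmf_of_set (assignments n nt)"

definition simple_graph :: "nat \<Rightarrow> (nat \<Rightarrow> nat \<Rightarrow> bool) \<Rightarrow> bool" where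
  "simple_graph n g \<longleftrightarrow> (\<forall>i\<in>{1..n}. \<not> g i i) \<and> (\<forall>i\<in>{1..n}. \<forall>j\<in>{1..n}. g i j \<longleftrightarrow> g j i)"

definition adj :: "(nat \<Rightarrow> nat \<Rightarrow> bool) \<Rightarrow> nat \<Rightarrow> nat \<Rightarrow> real" where
  "adj g i j = (if g i j then 1 else 0)"

definition num_edges :: "nat \<Rightarrow> (nat \<Rightarrow> nat \<Rightarrow> bool) \<Rightarrow> nat" where
  "num_edges n g = card {{i, j} | i j. i \<in> {1..n} \<and> j \<in> {1..n} \<and> g i j}"

text \<open>Naive difference-in-means estimator; Y i z is the potential outcome of unit i.\<close>
definition beta_naive :: "nat \<Rightarrow> (nat \<Rightarrow> (nat \<Rightarrow> real) \<Rightarrow> real) \<Rightarrow> (nat \<Rightarrow> real) \<Rightarrow> real" where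
  "beta_naive n Y z =
     (\<Sum>i\<in>{1..n}. Y i z * z i) / (\<Sum>i\<in>{1..n}. z i)
   - (\<Sum>i\<in>{1..n}. Y i z * (1 - z i)) / (\<Sum>i\<in>{1..n}. 1 - z i)"

definition DTE :: "nat \<Rightarrow> (nat \<Rightarrow> (nat \<Rightarrow> real) \<Rightarrow> real) \<Rightarrow> real" where
  "DTE n Y = (1 / real n) * (\<Sum>i\<in>{1..n}. Y i (\<lambda>j. if j = i then 1 else 0) - Y i (\<lambda>j. 0))"

end

(*
  Under complete randomization a fixed unit is treated with probability nt/n and a fixed
  pair of distinct units with probability nt(nt-1)/(n(n-1)); both come from counting the
  nt-subsets of {1..n} that contain a given set. Since the group sizes nt and n - nt are
  constant, the naive estimator is affine in the treated total \<Sum> Y_i z_i and the overall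
  total \<Sum> Y_i. Under linear interference (and z_i^2 = z_i) the first is a quadratic and the
  second a linear form in z, so their expectations follow from the two probabilities.
  Each of the 2m ordered edges contributes \<gamma>(nt-1)/(n(n-1)) to the treated mean but
  \<gamma> nt/(n(n-1)) to the control mean, which leaves the bias -\<gamma> 2m/(n(n-1)).
*)
theory Submission
  imports Defs
begin

lemma card_subsets_containing_eq:
  assumes "finite U" "B \<subseteq> U" "card B \<le> k"
  shows "card {A. A \<subseteq> U \<and> card A = k \<and> B \<subseteq> A} = (card U - card B) choose (k - card B)"
proof -
  have fin_B: "finite B" using assms finite_subset by blast
  have "{A. A \<subseteq> U \<and> card A = k \<and> B \<subseteq> A}
          = (\<lambda>C. C \<union> B) ` {C. C \<subseteq> U - B \<and> card C = k - card B}"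
  proof (intro equalityI subsetI)
    fix A assume A: "A \<in> {A. A \<subseteq> U \<and> card A = k \<and> B \<subseteq> A}"
    then have "A = (A - B) \<union> B" "card (A - B) = k - card B"
      using fin_B by (auto simp: card_Diff_subset)
    with A show "A \<in> (\<lambda>C. C \<union> B) ` {C. C \<subseteq> U - B \<and> card C = k - card B}" by blast
  next
    fix A assume "A \<in> (\<lambda>C. C \<union> B) ` {C. C \<subseteq> U - B \<and> card C = k - card B}"
    then obtain C where C: "C \<subseteq> U - B" "card C = k - card B" "A = C \<union> B" by auto
    have "finite C" "C \<inter> B = {}" using C(1) assms(1) finite_subset by auto
    then have "card A = k"
      using C assms(3) fin_B by (simp add: card_Un_disjoint)
    with C assms show "A \<in> {A. A \<subseteq> U \<and> card A = k \<and> B \<subseteq> A}" by auto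
  qed
  moreover have "inj_on (\<lambda>C. C \<union> B) {C. C \<subseteq> U - B \<and> card C = k - card B}"
    by (rule inj_onI) blast
  ultimately have "card {A. A \<subseteq> U \<and> card A = k \<and> B \<subseteq> A}
                     = card {C. C \<subseteq> U - B \<and> card C = k - card B}"
    by (simp add: card_image)
  also have "\<dots> = (card U - card B) choose (k - card B)"
    using assms fin_B by (simp add: n_subsets card_Diff_subset)
  finally show ?thesis .
qed

lemma card_subsets_containing:
  assumes "finite U" "B \<subseteq> U"
  shows "card {A. A \<subseteq> U \<and> card A = k \<and> B \<subseteq> A} * (card U choose card B)
           = (card U choose k) * (k choose card B)"
proof (cases "card B \<le> k \<and> k \<le> card U")
  case True
  then show ?thesis
    using assms choose_mult[of "card B" k "card U"] by (simp add: card_subsets_containing_eq)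
next
  case False
  then have empty: "{A. A \<subseteq> U \<and> card A = k \<and> B \<subseteq> A} = {}"
    using assms by (auto intro: card_mono finite_subset[of _ U])
  show ?thesis unfolding empty using False by auto
qed

lemma finite_card_subsets: "finite {A. A \<subseteq> {1..n::nat} \<and> card A = k}"
  by (rule finite_subset[of _ "Pow {1..n}"]) auto

lemma card_subsets_nonempty: "k \<le> n \<Longrightarrow> {A. A \<subseteq> {1..n} \<and> card A = k} \<noteq> {}"
  unfolding ex_in_conv[symmetric] by (rule exI[of _ "{1..k}"]) simp

lemma of_nat_choose_two: "real (m choose 2) = real m * (real m - 1) / 2"
  by (simp add: binomial_gbinomial gbinomial_pochhammer pochhammer_Suc_prod numeral_2_eq_2 algebra_simps)

lemma inj_indicator: "inj (indicator :: 'a set \<Rightarrow> 'a \<Rightarrow> real)"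
  by (rule injI) (metis indicator_eq_1_iff subsetI subset_antisym)

lemma assignments_eq_indicator_image:
  "assignments n nt = indicator ` {A. A \<subseteq> {1..n} \<and> card A = nt}"
proof (intro equalityI subsetI)
  fix z assume z: "z \<in> assignments n nt"
  let ?A = "{i\<in>{1..n}. z i = 1}"
  have "z = indicator ?A"
    using z unfolding assignments_def by (force simp: indicator_def)
  then show "z \<in> indicator ` {A. A \<subseteq> {1..n} \<and> card A = nt}"
    using z unfolding assignments_def by auto
next
  fix z :: "nat \<Rightarrow> real"
  assume "z \<in> indicator ` {A. A \<subseteq> {1..n} \<and> card A = nt}"
  then obtain A where "A \<subseteq> {1..n}" "card A = nt" "z = indicator A" by auto
  moreover from this have "{i\<in>{1..n}. indicator A i = (1::real)} = A" by (auto simp: indicator_eq_1_iff)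
  ultimately show "z \<in> assignments n nt"
    unfolding assignments_def by (auto simp: indicator_def)
qed

lemma finite_assignments: "finite (assignments n nt)"
  unfolding assignments_eq_indicator_image by (simp add: finite_card_subsets)

lemma assignments_nonempty: "nt \<le> n \<Longrightarrow> assignments n nt \<noteq> {}"
  unfolding assignments_eq_indicator_image using card_subsets_nonempty by blast

lemma set_pmf_crd: "nt \<le> n \<Longrightarrow> set_pmf (crd n nt) = assignments n nt"
  by (simp add: crd_def assignments_nonempty finite_assignments)

lemma crd_eq_map_pmf:
  assumes "nt \<le> n"
  shows "crd n nt = map_pmf indicator (pmf_of_set {A. A \<subseteq> {1..n} \<and> card A = nt})"
  unfolding crd_def assignments_eq_indicator_image
  by (rule map_pmf_of_set_inj[symmetric, OF inj_on_subset[OF inj_indicator]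
        card_subsets_nonempty[OF assms] finite_card_subsets]) simp

lemma integrable_crd: "nt \<le> n \<Longrightarrow> integrable (crd n nt) (f :: (nat \<Rightarrow> real) \<Rightarrow> real)"
  by (simp add: integrable_measure_pmf_finite set_pmf_crd finite_assignments)

lemma expectation_crd_cong:
  assumes "nt \<le> n" "\<And>z. z \<in> assignments n nt \<Longrightarrow> f z = h z"
  shows "measure_pmf.expectation (crd n nt) f = measure_pmf.expectation (crd n nt) h"
  using assms by (intro integral_cong_AE) (auto simp: AE_measure_pmf_iff set_pmf_crd)

lemma sum_assignment: "z \<in> assignments n nt \<Longrightarrow> (\<Sum>i\<in>{1..n}. z i) = real nt"
proof -
  assume "z \<in> assignments n nt"
  then obtain A where "A \<subseteq> {1..n}" "card A = nt" "z = indicator A"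
    unfolding assignments_eq_indicator_image by auto
  moreover from this have "{1..n} \<inter> {i. i \<in> A} = A" by auto
  ultimately show ?thesis by (simp add: indicator_def)
qed

lemma assignment_mult_self: "z \<in> assignments n nt \<Longrightarrow> i \<in> {1..n} \<Longrightarrow> z i * z i = z i"
  unfolding assignments_def by auto

lemma expectation_crd_prod:
  assumes "nt \<le> n" "B \<subseteq> {1..n}"
  shows "measure_pmf.expectation (crd n nt) (\<lambda>z. \<Prod>i\<in>B. z i)
           = real (nt choose card B) / real (n choose card B)"
proof -
  let ?S = "{A. A \<subseteq> {1..n} \<and> card A = nt}"
  have prod_eq: "(\<Prod>i\<in>B. indicator A i) = (indicator {A. B \<subseteq> A} A :: real)" for A :: "nat set"
    using finite_subset[OF assms(2)]
    by (cases "B \<subseteq> A") (auto simp: indicator_def prod_zero_iff intro!: prod.neutral)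
  have "measure_pmf.expectation (crd n nt) (\<lambda>z. \<Prod>i\<in>B. z i) = measure (pmf_of_set ?S) {A. B \<subseteq> A}"
    using assms by (simp add: crd_eq_map_pmf prod_eq)
  also have "\<dots> = real (card {A. A \<subseteq> {1..n} \<and> card A = nt \<and> B \<subseteq> A}) / real (n choose nt)"
    using measure_pmf_of_set[OF card_subsets_nonempty[OF assms(1)] finite_card_subsets]
    by (simp add: n_subsets Int_def conj_assoc)
  also have "\<dots> = real (nt choose card B) / real (n choose card B)"
  proof -
    have "card B \<le> n" using assms card_mono[of "{1..n}" B] by simp
    then have "real (n choose card B) > 0" "real (n choose nt) > 0" using assms by auto
    moreover have "real (card {A. A \<subseteq> {1..n} \<and> card A = nt \<and> B \<subseteq> A}) * real (n choose card B)
                   = real (n choose nt) * real (nt choose card B)"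
      using card_subsets_containing[of "{1..n}" B nt] assms by (simp flip: of_nat_mult)
    ultimately show ?thesis by (simp add: field_simps)
  qed
  finally show ?thesis .
qed

lemma expectation_crd_coord:
  assumes "nt \<le> n" "i \<in> {1..n}"
  shows "measure_pmf.expectation (crd n nt) (\<lambda>z. z i) = real nt / real n"
  using expectation_crd_prod[of nt n "{i}"] assms by simp

lemma expectation_crd_coord_pair:
  assumes "nt \<le> n" "i \<in> {1..n}" "j \<in> {1..n}" "i \<noteq> j"
  shows "measure_pmf.expectation (crd n nt) (\<lambda>z. z i * z j)
           = real nt * (real nt - 1) / (real n * (real n - 1))"
proof -
  have "card {i, j} = 2" using assms(4) by simp
  moreover have "measure_pmf.expectation (crd n nt) (\<lambda>z. \<Prod>k\<in>{i, j}. z k)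
                   = real (nt choose card {i, j}) / real (n choose card {i, j})"
    using assms by (intro expectation_crd_prod) auto
  ultimately show ?thesis
    using assms(4) by (simp only: of_nat_choose_two) simp
qed

lemma expectation_crd_linear_form:
  assumes "nt \<le> n"
  shows "measure_pmf.expectation (crd n nt) (\<lambda>z. \<Sum>i\<in>{1..n}. c i * z i)
           = real nt / real n * (\<Sum>i\<in>{1..n}. c i)"
  using assms by (simp add: integrable_crd expectation_crd_coord sum_distrib_left mult.commute)

lemma expectation_crd_quadratic_form:
  assumes "nt \<le> n" "\<And>i. i \<in> {1..n} \<Longrightarrow> a i i = 0"
  shows "measure_pmf.expectation (crd n nt) (\<lambda>z. \<Sum>i\<in>{1..n}. \<Sum>j\<in>{1..n}. a i j * (z i * z j))
           = real nt * (real nt - 1) / (real n * (real n - 1)) * (\<Sum>i\<in>{1..n}. \<Sum>j\<in>{1..n}. a i j)"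
proof -
  have "a i j * measure_pmf.expectation (crd n nt) (\<lambda>z. z i * z j)
          = real nt * (real nt - 1) / (real n * (real n - 1)) * a i j"
    if "i \<in> {1..n}" "j \<in> {1..n}" for i j
    using that assms by (cases "i = j") (simp_all add: expectation_crd_coord_pair)
  then show ?thesis
    using assms(1) by (simp add: integrable_crd sum_distrib_left)
qed

lemma expectation_beta_naive_crd:
  assumes "nt \<le> n"
  shows "measure_pmf.expectation (crd n nt) (beta_naive n Y)
           = measure_pmf.expectation (crd n nt) (\<lambda>z. \<Sum>i\<in>{1..n}. Y i z * z i) / real nt
             - (measure_pmf.expectation (crd n nt) (\<lambda>z. \<Sum>i\<in>{1..n}. Y i z)
                - measure_pmf.expectation (crd n nt) (\<lambda>z. \<Sum>i\<in>{1..n}. Y i z * z i)) / (real n - real nt)"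
    (is "_ = ?rhs")
proof -
  have "measure_pmf.expectation (crd n nt) (beta_naive n Y)
          = measure_pmf.expectation (crd n nt) (\<lambda>z. (\<Sum>i\<in>{1..n}. Y i z * z i) / real nt
              - ((\<Sum>i\<in>{1..n}. Y i z) - (\<Sum>i\<in>{1..n}. Y i z * z i)) / (real n - real nt))"
    using assms by (rule expectation_crd_cong)
      (use sum_assignment in \<open>simp add: beta_naive_def right_diff_distrib sum_subtractf\<close>)
  also have "\<dots> = ?rhs"
    using assms by (simp add: integrable_crd)
  finally show ?thesis .
qed

definition linear_interference ::
  "nat \<Rightarrow> (nat \<Rightarrow> nat \<Rightarrow> bool) \<Rightarrow> (nat \<Rightarrow> real) \<Rightarrow> (nat \<Rightarrow> real) \<Rightarrow> real \<Rightarrow>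
   nat \<Rightarrow> (nat \<Rightarrow> real) \<Rightarrow> real"
where
  "linear_interference n g \<alpha> \<beta> \<gamma> i z =
     \<alpha> i + \<beta> i * z i + \<gamma> * (\<Sum>j\<in>{1..n}. adj g i j * z j)"

lemma adj_self: "simple_graph n g \<Longrightarrow> i \<in> {1..n} \<Longrightarrow> adj g i i = 0"
  by (simp add: simple_graph_def adj_def)

lemma DTE_linear_interference:
  assumes "simple_graph n g"
  shows "DTE n (linear_interference n g \<alpha> \<beta> \<gamma>) = (\<Sum>i\<in>{1..n}. \<beta> i) / real n"
proof -
  have "(\<Sum>j\<in>{1..n}. adj g i j * (if j = i then 1 else 0)) = 0" if "i \<in> {1..n}" for i
    using that adj_self[OF assms] by (simp add: if_distrib cong: if_cong)
  then show ?thesis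
    by (simp add: DTE_def linear_interference_def)
qed

lemma sum_adj_eq_twice_num_edges:
  assumes "simple_graph n g"
  shows "(\<Sum>i\<in>{1..n}. \<Sum>j\<in>{1..n}. adj g i j) = 2 * real (num_edges n g)"
proof -
  define P where "P = {p \<in> {1..n} \<times> {1..n}. g (fst p) (snd p)}"
  define E where "E = {{i, j} | i j. i \<in> {1..n} \<and> j \<in> {1..n} \<and> g i j}"
  have fin_P: "finite P" unfolding P_def by (rule finite_subset[of _ "{1..n} \<times> {1..n}"]) auto
  have fin_E: "finite E" unfolding E_def by (rule finite_subset[of _ "Pow {1..n}"]) auto
  have "(\<Sum>i\<in>{1..n}. \<Sum>j\<in>{1..n}. adj g i j)
          = (\<Sum>p\<in>{1..n} \<times> {1..n}. if g (fst p) (snd p) then 1 else 0)"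
    by (simp add: sum.cartesian_product case_prod_beta' adj_def)
  also have "\<dots> = real (card P)"
    unfolding P_def by (simp add: sum.inter_filter[symmetric])
  also have "card P = (\<Sum>e\<in>E. card {p \<in> P. {fst p, snd p} = e})"
  proof -
    have "{a, b} \<in> E" if "(a, b) \<in> P" for a b
      using that unfolding P_def E_def by (intro CollectI exI[of _ a] exI[of _ b]) auto
    then have "(\<lambda>p. {fst p, snd p}) ` P \<subseteq> E" by auto
    from sum.group[OF fin_P fin_E this, of "\<lambda>_. 1 :: nat"] show ?thesis
      by simp
  qed
  also have "\<dots> = (\<Sum>e\<in>E. 2)"
  proof (rule sum.cong[OF refl])
    fix e assume "e \<in> E"
    then obtain i j where e: "e = {i, j}" and ij: "i \<in> {1..n}" "j \<in> {1..n}" "g i j"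
      unfolding E_def by blast
    with assms have "i \<noteq> j" "g j i" unfolding simple_graph_def by auto
    with ij have "{p \<in> P. {fst p, snd p} = e} = {(i, j), (j, i)}"
      unfolding P_def e by (auto simp: doubleton_eq_iff)
    with \<open>i \<noteq> j\<close> show "card {p \<in> P. {fst p, snd p} = e} = 2" by simp
  qed
  finally show ?thesis by (simp add: E_def num_edges_def)
qed

lemma expectation_total_outcome:
  assumes "nt \<le> n"
  shows "measure_pmf.expectation (crd n nt) (\<lambda>z. \<Sum>i\<in>{1..n}. linear_interference n g \<alpha> \<beta> \<gamma> i z)
           = (\<Sum>i\<in>{1..n}. \<alpha> i)
             + real nt / real n * ((\<Sum>i\<in>{1..n}. \<beta> i) + \<gamma> * (\<Sum>i\<in>{1..n}. \<Sum>j\<in>{1..n}. adj g i j))"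
proof -
  define c where "c j = \<beta> j + \<gamma> * (\<Sum>i\<in>{1..n}. adj g i j)" for j
  have swap: "(\<Sum>i\<in>{1..n}. \<Sum>j\<in>{1..n}. adj g i j * z j) = (\<Sum>j\<in>{1..n}. (\<Sum>i\<in>{1..n}. adj g i j) * z j)"
    for z :: "nat \<Rightarrow> real"
    by (subst sum.swap) (simp add: sum_distrib_right)
  have total: "(\<Sum>i\<in>{1..n}. linear_interference n g \<alpha> \<beta> \<gamma> i z)
                 = (\<Sum>i\<in>{1..n}. \<alpha> i) + (\<Sum>j\<in>{1..n}. c j * z j)" for z
  proof -
    have "(\<Sum>i\<in>{1..n}. linear_interference n g \<alpha> \<beta> \<gamma> i z)
            = (\<Sum>i\<in>{1..n}. \<alpha> i) + (\<Sum>i\<in>{1..n}. \<beta> i * z i)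
              + \<gamma> * (\<Sum>i\<in>{1..n}. \<Sum>j\<in>{1..n}. adj g i j * z j)"
      by (simp add: linear_interference_def sum.distrib sum_distrib_left)
    then show ?thesis
      unfolding swap c_def by (simp add: distrib_right sum.distrib mult.assoc flip: sum_distrib_left)
  qed
  have "measure_pmf.expectation (crd n nt) (\<lambda>z. \<Sum>i\<in>{1..n}. linear_interference n g \<alpha> \<beta> \<gamma> i z)
          = (\<Sum>i\<in>{1..n}. \<alpha> i) + measure_pmf.expectation (crd n nt) (\<lambda>z. \<Sum>j\<in>{1..n}. c j * z j)"
    unfolding total using assms by (simp add: integrable_crd)
  also have "\<dots> = (\<Sum>i\<in>{1..n}. \<alpha> i) + real nt / real n * (\<Sum>j\<in>{1..n}. c j)"
    by (simp only: expectation_crd_linear_form[OF assms])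
  also have "(\<Sum>j\<in>{1..n}. c j) = (\<Sum>i\<in>{1..n}. \<beta> i) + \<gamma> * (\<Sum>i\<in>{1..n}. \<Sum>j\<in>{1..n}. adj g i j)"
    unfolding c_def sum.distrib sum_distrib_left[symmetric] by (subst sum.swap) (rule refl)
  finally show ?thesis .
qed

lemma expectation_treated_outcome:
  assumes "simple_graph n g" "nt \<le> n"
  shows "measure_pmf.expectation (crd n nt) (\<lambda>z. \<Sum>i\<in>{1..n}. linear_interference n g \<alpha> \<beta> \<gamma> i z * z i)
           = real nt / real n * ((\<Sum>i\<in>{1..n}. \<alpha> i) + (\<Sum>i\<in>{1..n}. \<beta> i))
             + real nt * (real nt - 1) / (real n * (real n - 1))
               * (\<gamma> * (\<Sum>i\<in>{1..n}. \<Sum>j\<in>{1..n}. adj g i j))"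
    (is "_ = ?rhs")
proof -
  have "measure_pmf.expectation (crd n nt) (\<lambda>z. \<Sum>i\<in>{1..n}. linear_interference n g \<alpha> \<beta> \<gamma> i z * z i)
      = measure_pmf.expectation (crd n nt) (\<lambda>z. (\<Sum>i\<in>{1..n}. (\<alpha> i + \<beta> i) * z i)
          + (\<Sum>i\<in>{1..n}. \<Sum>j\<in>{1..n}. \<gamma> * adj g i j * (z i * z j)))"
  proof (rule expectation_crd_cong[OF assms(2)])
    fix z assume z: "z \<in> assignments n nt"
    have "linear_interference n g \<alpha> \<beta> \<gamma> i z * z i
            = (\<alpha> i + \<beta> i) * z i + (\<Sum>j\<in>{1..n}. \<gamma> * adj g i j * (z i * z j))"
      if "i \<in> {1..n}" for i
      using assignment_mult_self[OF z that]
      by (simp add: linear_interference_def sum_distrib_left sum_distrib_right algebra_simps)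
    then show "(\<Sum>i\<in>{1..n}. linear_interference n g \<alpha> \<beta> \<gamma> i z * z i)
        = (\<Sum>i\<in>{1..n}. (\<alpha> i + \<beta> i) * z i)
          + (\<Sum>i\<in>{1..n}. \<Sum>j\<in>{1..n}. \<gamma> * adj g i j * (z i * z j))"
      by (simp add: sum.distrib)
  qed
  also have "\<dots> = measure_pmf.expectation (crd n nt) (\<lambda>z. \<Sum>i\<in>{1..n}. (\<alpha> i + \<beta> i) * z i)
        + measure_pmf.expectation (crd n nt)
            (\<lambda>z. \<Sum>i\<in>{1..n}. \<Sum>j\<in>{1..n}. \<gamma> * adj g i j * (z i * z j))"
    by (rule Bochner_Integration.integral_add) (simp_all add: integrable_crd assms(2))
  also have "\<dots> = ?rhs"
    by (simp only: expectation_crd_linear_form[OF assms(2)] expectation_crd_quadratic_form[OF assms(2)]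
          adj_self[OF assms(1)] mult_zero_right)
       (simp add: sum.distrib sum_distrib_left)
  finally show ?thesis .
qed

lemma expectation_beta_naive_linear_interference:
  assumes "simple_graph n g" "0 < nt" "nt < n"
  shows "measure_pmf.expectation (crd n nt) (beta_naive n (linear_interference n g \<alpha> \<beta> \<gamma>))
           = (\<Sum>i\<in>{1..n}. \<beta> i) / real n
             - \<gamma> * (\<Sum>i\<in>{1..n}. \<Sum>j\<in>{1..n}. adj g i j) / (real n * (real n - 1))"
proof -
  define A where "A = (\<Sum>i\<in>{1..n}. \<alpha> i)"
  define B where "B = (\<Sum>i\<in>{1..n}. \<beta> i)"
  define M where "M = \<gamma> * (\<Sum>i\<in>{1..n}. \<Sum>j\<in>{1..n}. adj g i j)"
  define p where "p = real nt / real n"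
  define q where "q = real nt * (real nt - 1) / (real n * (real n - 1))"
  have "nt \<le> n" "real n - real nt \<noteq> 0" "1 < real n" using assms by auto
  have "measure_pmf.expectation (crd n nt) (beta_naive n (linear_interference n g \<alpha> \<beta> \<gamma>))
        = (p * (A + B) + q * M) / real nt - (A + p * B + p * M - (p * (A + B) + q * M)) / (real n - real nt)"
    unfolding expectation_beta_naive_crd[OF \<open>nt \<le> n\<close>] expectation_total_outcome[OF \<open>nt \<le> n\<close>]
      expectation_treated_outcome[OF assms(1) \<open>nt \<le> n\<close>]
    by (simp add: A_def B_def M_def p_def q_def distrib_left mult.assoc)
  also have "(p * (A + B) + q * M) / real nt = (A + B) / real n + (real nt - 1) / (real n * (real n - 1)) * M"
    using assms by (simp add: p_def q_def field_simps)
  also have "A + p * B + p * M - (p * (A + B) + q * M)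
               = (real n - real nt) * (A / real n + real nt / (real n * (real n - 1)) * M)"
    using assms \<open>1 < real n\<close> by (simp add: p_def q_def field_simps)
  also have "(real n - real nt) * (A / real n + real nt / (real n * (real n - 1)) * M) / (real n - real nt)
               = A / real n + real nt / (real n * (real n - 1)) * M"
    using \<open>real n - real nt \<noteq> 0\<close> by simp
  finally show ?thesis
    unfolding B_def[symmetric] M_def[symmetric] by (simp add: diff_divide_distrib add_divide_distrib algebra_simps)
qed

theorem proposition12:
  fixes n nt :: nat and g :: "nat \<Rightarrow> nat \<Rightarrow> bool"
    and \<alpha> \<beta> :: "nat \<Rightarrow> real" and \<gamma> :: real
    and Y :: "nat \<Rightarrow> (nat \<Rightarrow> real) \<Rightarrow> real"
  assumes "n \<ge> 2"
    and "simple_graph n g"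
    and "1 \<le> nt" and "nt \<le> n - 1"
    and "\<And>i z. Y i z = \<alpha> i + \<beta> i * z i + \<gamma> * (\<Sum>j\<in>{1..n}. adj g i j * z j)"
  shows "measure_pmf.expectation (crd n nt) (beta_naive n Y) - DTE n Y
           = - \<gamma> * (2 * real (num_edges n g)) / (real n * (real n - 1))"
proof -
  have Y: "Y = linear_interference n g \<alpha> \<beta> \<gamma>"
    by (intro ext) (simp add: assms(5) linear_interference_def)
  have nt: "0 < nt" "nt < n" using assms by auto
  show ?thesis
    unfolding Y expectation_beta_naive_linear_interference[OF assms(2) nt] DTE_linear_interference[OF assms(2)]
      sum_adj_eq_twice_num_edges[OF assms(2)]
    by simp
qed

end
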